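(* Suppose $\kappa^2(1-\gamma)^H<1$ and the disturbance-action policy is implemented with parameters $\bm M_t\in\mathcal M$ for all $t$. Let $J_T(\bm M_{0:T})=\mathbb E[\sum_{t=0}^Tc_t(x_t,u_t)]$ be the resulting expected total cost. Then $$\Big|J_T(\bm M_{0:T})-\sum_{t=0}^Tf_t(\bm M_{t-H:t})\Big|\le TGb^2\kappa^2(1-\gamma)^H(1+\kappa),$$ where $b=\frac{\kappa\sqrt n\,\bar w(\kappa^2+2\kappa^5\kappa_B\sqrt{mn}H)}{(1-\kappa^2(1-\gamma)^H)\gamma}+\frac{2\sqrt{mn}\kappa^3\bar w}{\gamma}$.
   Context: System $x_{t+1}=Ax_t+Bu_t+w_t$, $A\in\mathbb R^{n\times n}$, $B\in\mathbb R^{n\times m}$, $x_0=0$, $t=0,\dots,T$; $w_t$ i.i.d. with $\|w_t\|_\infty\le\bar w$, $\bar w>0$. Costs: each $c_t$ is convex and differentiable on $\mathbb R^n\times\mathbb R^m$, and there is $G>0$ with $\|\nabla_xc_t(x,u)\|_2,\|\nabla_uc_t(x,u)\|_2\le Gb'$ whenever $\|x\|_2,\|u\|_2\le b'$ (for any $b'>0$). Matrix $\|\cdot\|_\infty$ = max absolute row sum, $\|\cdot\|_2$ spectral norm. For $\kappa\ge1$, $\gamma\in(0,1)$, $K$ is $(\kappa,\gamma)$-strongly stable if $A-BK=Q^{-1}LQ$ with $\|L\|_2\le1-\gamma$, $\max(\|Q\|_2,\|Q^{-1}\|_2,\|K\|_2)\le\kappa$; $\kappa_B=\max(\|B\|_2,1)$.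 Fix $(\kappa,\gamma)$-strongly stable $\mathbb K$, $A_{\mathbb K}=A-B\mathbb K$, $H\ge1$. Parameters $\bm M=(M^{[1]},\dots,M^{[H]})$, $M^{[i]}\in\mathbb R^{m\times n}$; $\mathcal M=\{\bm M:\|M^{[i]}\|_\infty\le2\sqrt n\kappa^3(1-\gamma)^{i-1}\}$; implementing $\bm M_t$ means $u_t=-\mathbb Kx_t+\sum_{i=1}^HM_t^{[i]}w_{t-i}$ with $w_s=0$ for $s<0$. $\Phi^x_k(\bm M_{t-H:t-1})=A_{\mathbb K}^{k-1}\mathds1_{(k\le H)}+\sum_{i=1}^HA_{\mathbb K}^{i-1}BM_{t-i}^{[k-i]}\mathds1_{(1\le k-i\le H)}$, $\Phi^u_k(\bm M_{t-H:t})=M_t^{[k]}\mathds1_{(k\le H)}-\mathbb K\Phi^x_k(\bm M_{t-H:t-1})$; approximate state and action $\tilde x_t=\sum_{k=1}^{2H}\Phi^x_k(\bm M_{t-H:t-1})w_{t-k}$, $\tilde u_t=\sum_{k=1}^{2H}\Phi^u_k(\bm M_{t-H:t})w_{t-k}$; $f_t(\bm M_{t-H:t})=\mathbb E[c_t(\tilde x_t,\tilde u_t)]$. *)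

theory Defs
  imports "HOL-Analysis.Analysis" "HOL-Probability.Probability"
begin

definition spec_norm :: "real^'a^'b \<Rightarrow> real" where
  "spec_norm M = onorm (\<lambda>x. M *v x)"

definition mat_inf_norm :: "real^'a^'b \<Rightarrow> real" where
  "mat_inf_norm M = Max (range (\<lambda>i. \<Sum>j\<in>UNIV. \<bar>M $ i $ j\<bar>))"

text \<open>Matrix powers (the type real^'n^'n has componentwise multiplication, so we define them).\<close>
fun mpow :: "real^'n^'n \<Rightarrow> nat \<Rightarrow> real^'n^'n" where
  "mpow X 0 = mat 1"
| "mpow X (Suc k) = X ** mpow X k"

definition strongly_stable :: "real \<Rightarrow> real \<Rightarrow> real^'n^'n \<Rightarrow> real^'m^'n \<Rightarrow> real^'n^'m \<Rightarrow> bool" where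
  "strongly_stable \<kappa> \<gamma> A B K \<longleftrightarrow>
     (\<exists>(Q::real^'n^'n) (L::real^'n^'n). invertible Q \<and> A - B ** K = matrix_inv Q ** L ** Q \<and>
        spec_norm L \<le> 1 - \<gamma> \<and> spec_norm Q \<le> \<kappa> \<and> spec_norm (matrix_inv Q) \<le> \<kappa> \<and> spec_norm K \<le> \<kappa>)"

text \<open>Membership of a parameter tuple (M^[1],...,M^[H]) (given as a function of the lag index) in the set \<M>.\<close>
definition in_Mset :: "real \<Rightarrow> real \<Rightarrow> nat \<Rightarrow> (nat \<Rightarrow> real^'n^'m) \<Rightarrow> bool" where
  "in_Mset \<kappa> \<gamma> H Mt \<longleftrightarrow>
     (\<forall>i\<in>{1..H}. mat_inf_norm (Mt i) \<le> 2 * sqrt (real CARD('n)) * \<kappa>^3 * (1 - \<gamma>)^(i - 1))"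

definition past :: "(nat \<Rightarrow> 'v::zero) \<Rightarrow> nat \<Rightarrow> nat \<Rightarrow> 'v" where
  "past w t i = (if i \<le> t then w (t - i) else 0)"

text \<open>Parameters M_{t-i} (time index t-i, as function of the lag index);
  for negative times the parameters only ever multiply zero disturbances, we set them to 0.\<close>
definition Mpast :: "(nat \<Rightarrow> nat \<Rightarrow> real^'n^'m) \<Rightarrow> nat \<Rightarrow> nat \<Rightarrow> nat \<Rightarrow> real^'n^'m" where
  "Mpast M t i = (if i \<le> t then M (t - i) else (\<lambda>_. 0))"

definition dap_input :: "real^'n^'m \<Rightarrow> nat \<Rightarrow> (nat \<Rightarrow> nat \<Rightarrow> real^'n^'m) \<Rightarrow> (nat \<Rightarrow> real^'n)
    \<Rightarrow> real^'n \<Rightarrow> nat \<Rightarrow> real^'m" where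
  "dap_input K H M w x t = - (K *v x) + (\<Sum>i=1..H. M t i *v past w t i)"

fun dap_state :: "real^'n^'n \<Rightarrow> real^'m^'n \<Rightarrow> real^'n^'m \<Rightarrow> nat \<Rightarrow> (nat \<Rightarrow> nat \<Rightarrow> real^'n^'m)
    \<Rightarrow> (nat \<Rightarrow> real^'n) \<Rightarrow> nat \<Rightarrow> real^'n" where
  "dap_state A B K H M w 0 = 0"
| "dap_state A B K H M w (Suc t) =
     A *v dap_state A B K H M w t + B *v dap_input K H M w (dap_state A B K H M w t) t + w t"

definition dap_action :: "real^'n^'n \<Rightarrow> real^'m^'n \<Rightarrow> real^'n^'m \<Rightarrow> nat \<Rightarrow> (nat \<Rightarrow> nat \<Rightarrow> real^'n^'m)
    \<Rightarrow> (nat \<Rightarrow> real^'n) \<Rightarrow> nat \<Rightarrow> real^'m" where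
  "dap_action A B K H M w t = dap_input K H M w (dap_state A B K H M w t) t"

definition Phi_x :: "real^'n^'n \<Rightarrow> real^'m^'n \<Rightarrow> real^'n^'m \<Rightarrow> nat \<Rightarrow> (nat \<Rightarrow> nat \<Rightarrow> real^'n^'m)
    \<Rightarrow> nat \<Rightarrow> nat \<Rightarrow> real^'n^'n" where
  "Phi_x A B K H M t k =
     (if k \<le> H then mpow (A - B ** K) (k - 1) else 0) +
     (\<Sum>i=1..H. if 1 \<le> k - i \<and> k - i \<le> H
                 then mpow (A - B ** K) (i - 1) ** B ** Mpast M t i (k - i) else 0)"

definition Phi_u :: "real^'n^'n \<Rightarrow> real^'m^'n \<Rightarrow> real^'n^'m \<Rightarrow> nat \<Rightarrow> (nat \<Rightarrow> nat \<Rightarrow> real^'n^'m)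
    \<Rightarrow> nat \<Rightarrow> nat \<Rightarrow> real^'n^'m" where
  "Phi_u A B K H M t k = (if k \<le> H then M t k else 0) - K ** Phi_x A B K H M t k"

definition approx_state :: "real^'n^'n \<Rightarrow> real^'m^'n \<Rightarrow> real^'n^'m \<Rightarrow> nat \<Rightarrow> (nat \<Rightarrow> nat \<Rightarrow> real^'n^'m)
    \<Rightarrow> (nat \<Rightarrow> real^'n) \<Rightarrow> nat \<Rightarrow> real^'n" where
  "approx_state A B K H M w t = (\<Sum>k=1..2*H. Phi_x A B K H M t k *v past w t k)"

definition approx_action :: "real^'n^'n \<Rightarrow> real^'m^'n \<Rightarrow> real^'n^'m \<Rightarrow> nat \<Rightarrow> (nat \<Rightarrow> nat \<Rightarrow> real^'n^'m)
    \<Rightarrow> (nat \<Rightarrow> real^'n) \<Rightarrow> nat \<Rightarrow> real^'m" where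
  "approx_action A B K H M w t = (\<Sum>k=1..2*H. Phi_u A B K H M t k *v past w t k)"

definition surrogate_cost :: "'w measure \<Rightarrow> (nat \<Rightarrow> 'w \<Rightarrow> real^'n) \<Rightarrow> (nat \<Rightarrow> real^'n \<Rightarrow> real^'m \<Rightarrow> real)
    \<Rightarrow> real^'n^'n \<Rightarrow> real^'m^'n \<Rightarrow> real^'n^'m \<Rightarrow> nat \<Rightarrow> (nat \<Rightarrow> nat \<Rightarrow> real^'n^'m) \<Rightarrow> nat \<Rightarrow> real" where
  "surrogate_cost P w c A B K H M t =
     (LINT \<omega>|P. c t (approx_state A B K H M (\<lambda>s. w s \<omega>) t) (approx_action A B K H M (\<lambda>s. w s \<omega>) t))"

definition total_cost :: "'w measure \<Rightarrow> (nat \<Rightarrow> 'w \<Rightarrow> real^'n) \<Rightarrow> (nat \<Rightarrow> real^'n \<Rightarrow> real^'m \<Rightarrow> real)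
    \<Rightarrow> real^'n^'n \<Rightarrow> real^'m^'n \<Rightarrow> real^'n^'m \<Rightarrow> nat \<Rightarrow> (nat \<Rightarrow> nat \<Rightarrow> real^'n^'m) \<Rightarrow> nat \<Rightarrow> real" where
  "total_cost P w c A B K H M T =
     (LINT \<omega>|P. (\<Sum>t=0..T. c t (dap_state A B K H M (\<lambda>s. w s \<omega>) t) (dap_action A B K H M (\<lambda>s. w s \<omega>) t)))"

end

theory Submission
  imports Defs
begin

(* Under the policy the closed loop is x_{t+1} = (A - B K) x_t + d_t with the drive
   d_t = w_t + B sum_i M_t^[i] w_{t-i}, which is bounded uniformly in t. Hence
   x_t = sum_{i=1}^t (A - B K)^(i-1) d_{t-i}, and the surrogate state is exactly the truncation of
   this sum to i <= H. Strong stability makes the i-th term decay like kappa^2 (1 - gamma)^(i-1), so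
   true and surrogate states and actions all lie in the ball of radius b and differ by
   O((1 - gamma)^H). On that ball c_t is G b-Lipschitz (mean value theorem along a segment), and
   summing over t = 1..T (the terms at t = 0 coincide) gives the bound pathwise, hence in
   expectation. *)

lemma norm_matrix_vector_le_spec_norm: "norm (M *v x) \<le> spec_norm M * norm x"
  unfolding spec_norm_def by (rule onorm) simp

lemma spec_norm_nonneg: "0 \<le> spec_norm M"
  unfolding spec_norm_def by (rule onorm_pos_le) simp

lemma norm_matrix_vector_le:
  assumes "spec_norm M \<le> c"
  shows "norm (M *v x) \<le> c * norm x"
  using norm_matrix_vector_le_spec_norm[of M x] assms
  by (meson mult_right_mono norm_ge_zero order_trans)

lemma norm_matrix_vector_le_mat_inf_norm:
  fixes M :: "real^'a^'b"
  shows "norm (M *v x) \<le> sqrt (real CARD('b)) * (mat_inf_norm M * infnorm x)"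
proof -
  have "\<bar>(M *v x) $ i\<bar> \<le> mat_inf_norm M * infnorm x" for i
  proof -
    have "\<bar>(M *v x) $ i\<bar> \<le> (\<Sum>j\<in>UNIV. \<bar>M $ i $ j\<bar> * infnorm x)"
      unfolding matrix_vector_mult_def vec_lambda_beta
      by (rule order_trans[OF sum_abs sum_mono])
         (simp add: abs_mult mult_left_mono component_le_infnorm_cart)
    also have "\<dots> \<le> mat_inf_norm M * infnorm x"
      unfolding mat_inf_norm_def sum_distrib_right[symmetric]
      by (intro mult_right_mono Max_ge) (auto simp: infnorm_pos_le)
    finally show ?thesis .
  qed
  then have "infnorm (M *v x) \<le> mat_inf_norm M * infnorm x"
    unfolding infnorm_cart by (intro cSup_least) auto
  then show ?thesis
    using norm_le_infnorm[of "M *v x"] by (simp add: order_trans mult_left_mono)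
qed

lemma sum_matrix_vector_mult: "(\<Sum>i\<in>S. f i) *v (x::real^'a) = (\<Sum>i\<in>S. (f i :: real^'a^'b) *v x)"
  by (induction S rule: infinite_finite_induct) (auto simp: matrix_vector_mult_add_rdistrib)

lemma matrix_inv_cancel:
  assumes "invertible Q"
  shows "matrix_inv Q ** Q = mat 1" "Q ** matrix_inv Q = mat 1"
  using assms unfolding invertible_def matrix_inv_def by (auto intro: someI2_ex)

lemma mpow_similar:
  assumes "invertible Q"
  shows "mpow (matrix_inv Q ** L ** Q) j = matrix_inv Q ** mpow L j ** Q"
proof (induction j)
  case 0
  show ?case using matrix_inv_cancel[OF assms] by simp
next
  case (Suc j)
  have "mpow (matrix_inv Q ** L ** Q) (Suc j)
      = matrix_inv Q ** L ** (Q ** matrix_inv Q) ** mpow L j ** Q"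
    using Suc by (simp add: matrix_mul_assoc)
  then show ?case using matrix_inv_cancel[OF assms] by (simp add: matrix_mul_assoc)
qed

lemma mpow_Suc_pred: "0 < j \<Longrightarrow> X ** mpow X (j - 1) = mpow X j"
  by (cases j) auto

lemma norm_mpow_vector_le:
  assumes "spec_norm L \<le> r"
  shows "norm (mpow L j *v z) \<le> r^j * norm z"
proof (induction j)
  case (Suc j)
  have "norm (mpow L (Suc j) *v z) = norm (L *v (mpow L j *v z))"
    by (simp add: matrix_vector_mul_assoc)
  also have "\<dots> \<le> spec_norm L * norm (mpow L j *v z)"
    by (rule norm_matrix_vector_le_spec_norm)
  also have "\<dots> \<le> r * (r^j * norm z)"
    using assms Suc spec_norm_nonneg[of L] by (intro mult_mono) auto
  finally show ?case by simp
qed simp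

lemma strongly_stable_gain_le:
  assumes "strongly_stable \<kappa> \<gamma> A B K"
  shows "norm (K *v z) \<le> \<kappa> * norm z"
  using assms unfolding strongly_stable_def by (blast intro: norm_matrix_vector_le)

lemma strongly_stable_mpow_le:
  fixes A :: "real^'n^'n" and B :: "real^'m^'n" and K :: "real^'n^'m"
  assumes "strongly_stable \<kappa> \<gamma> A B K"
  shows "norm (mpow (A - B ** K) j *v z) \<le> \<kappa>^2 * (1 - \<gamma>)^j * norm z"
proof -
  obtain Q L :: "real^'n^'n" where Q: "invertible Q" "A - B ** K = matrix_inv Q ** L ** Q"
    "spec_norm L \<le> 1 - \<gamma>" "spec_norm Q \<le> \<kappa>" "spec_norm (matrix_inv Q) \<le> \<kappa>"
    using assms unfolding strongly_stable_def by blast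
  have \<gamma>: "0 \<le> 1 - \<gamma>" using Q(3) spec_norm_nonneg[of L] by linarith
  have "norm (mpow (A - B ** K) j *v z) = norm (matrix_inv Q *v (mpow L j *v (Q *v z)))"
    using mpow_similar[OF Q(1)] Q(2) by (simp add: matrix_vector_mul_assoc matrix_mul_assoc)
  also have "\<dots> \<le> \<kappa> * norm (mpow L j *v (Q *v z))"
    by (rule norm_matrix_vector_le[OF Q(5)])
  also have "\<dots> \<le> \<kappa> * ((1 - \<gamma>)^j * norm (Q *v z))"
    using norm_mpow_vector_le[OF Q(3)] Q(5) spec_norm_nonneg[of "matrix_inv Q"]
    by (intro mult_left_mono) auto
  also have "\<dots> \<le> \<kappa> * ((1 - \<gamma>)^j * (\<kappa> * norm z))"
    using norm_matrix_vector_le[OF Q(4)] Q(5) \<gamma> spec_norm_nonneg[of "matrix_inv Q"]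
    by (intro mult_left_mono) auto
  finally show ?thesis by (simp add: power2_eq_square mult_ac)
qed

lemma geometric_tail_le:
  fixes r :: real
  assumes "0 \<le> r" "r < 1"
  shows "(\<Sum>i=Suc a..N. r^(i - 1)) \<le> r^a / (1 - r)"
proof (cases "a < N")
  case True
  have "(\<Sum>i=Suc a..N. r^(i - 1)) = (\<Sum>i=a..N - 1. r^i)"
    using sum.shift_bounds_cl_Suc_ivl[of "\<lambda>i. r^(i - 1)" a "N - 1"] True by simp
  also have "\<dots> = (r^a - r^N) / (1 - r)"
    using sum_gp_multiplied[of a "N - 1" r] True assms by (simp add: field_simps)
  also have "\<dots> \<le> r^a / (1 - r)"
    using assms by (intro divide_right_mono) auto
  finally show ?thesis .
qed (use assms in simp)

lemma sum_if_le_eq_sum_min: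
  fixes t :: nat
  shows "(\<Sum>i=a..N. if i \<le> t then f i else 0) = (\<Sum>i=a..min t N. f i)"
  by (rule sum.mono_neutral_cong_right) auto

lemma sum_window_shift:
  fixes i H :: nat
  assumes "i \<le> H"
  shows "(\<Sum>k=1..2*H. if 1 \<le> k - i \<and> k - i \<le> H then f k else 0) = (\<Sum>l=1..H. f (l + i))"
proof -
  have "(\<Sum>k=1..2*H. if 1 \<le> k - i \<and> k - i \<le> H then f k else 0) = (\<Sum>k=1+i..H+i. f k)"
    using assms by (intro sum.mono_neutral_cong_right) auto
  also have "\<dots> = (\<Sum>l=1..H. f (l + i))"
    by (rule sum.shift_bounds_cl_nat_ivl)
  finally show ?thesis .
qed

definition dap_feedforward ::
    "nat \<Rightarrow> (nat \<Rightarrow> nat \<Rightarrow> real^'n^'m) \<Rightarrow> (nat \<Rightarrow> real^'n) \<Rightarrow> nat \<Rightarrow> real^'m" where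
  "dap_feedforward H M w s = (\<Sum>i=1..H. M s i *v past w s i)"

definition dap_drive :: "real^'m^'n \<Rightarrow> nat \<Rightarrow> (nat \<Rightarrow> nat \<Rightarrow> real^'n^'m)
    \<Rightarrow> (nat \<Rightarrow> real^'n) \<Rightarrow> nat \<Rightarrow> real^'n" where
  "dap_drive B H M w s = w s + B *v dap_feedforward H M w s"

lemma dap_action_eq:
  "dap_action A B K H M w t = dap_feedforward H M w t - K *v dap_state A B K H M w t"
  by (simp add: dap_action_def dap_input_def dap_feedforward_def)

lemma dap_state_Suc_closed_loop:
  "dap_state A B K H M w (Suc t) = (A - B ** K) *v dap_state A B K H M w t + dap_drive B H M w t"
  by (simp add: dap_input_def dap_drive_def dap_feedforward_def matrix_vector_mul_assoc
      algebra_simps)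

lemma dap_state_unroll:
  "dap_state A B K H M w t = (\<Sum>i=1..t. mpow (A - B ** K) (i - 1) *v dap_drive B H M w (t - i))"
proof (induction t)
  case (Suc t)
  let ?F = "\<lambda>i. mpow (A - B ** K) (i - 1) *v dap_drive B H M w (Suc t - i)"
  have "(A - B ** K) *v dap_state A B K H M w t
      = (\<Sum>i=1..t. mpow (A - B ** K) i *v dap_drive B H M w (t - i))"
    unfolding Suc vec.sum
    by (intro sum.cong refl)
       (auto simp: matrix_vector_mul_assoc mpow_Suc_pred simp del: One_nat_def)
  also have "\<dots> = (\<Sum>i=Suc 1..Suc t. ?F i)"
    by (subst sum.shift_bounds_cl_Suc_ivl) simp
  finally have "dap_state A B K H M w (Suc t) = ?F 1 + (\<Sum>i=Suc 1..Suc t. ?F i)"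
    unfolding dap_state_Suc_closed_loop by simp
  also have "\<dots> = (\<Sum>i=1..Suc t. ?F i)"
    by (rule sum.atLeast_Suc_atMost[symmetric]) simp
  finally show ?case .
qed simp

lemma sum_lagged_feedforward:
  "(\<Sum>l=1..H. Mpast M t i l *v past w t (l + i))
     = (if i \<le> t then dap_feedforward H M w (t - i) else 0)"
  unfolding dap_feedforward_def by (auto simp: Mpast_def past_def add.commute intro!: sum.cong)

lemma approx_state_unroll:
  "approx_state A B K H M w t
     = (\<Sum>i=1..min t H. mpow (A - B ** K) (i - 1) *v dap_drive B H M w (t - i))"
proof -
  let ?AK = "A - B ** K"
  have free: "(\<Sum>k=1..2*H. (if k \<le> H then mpow ?AK (k - 1) else 0) *v past w t k)
      = (\<Sum>i=1..min t H. mpow ?AK (i - 1) *v w (t - i))"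
  proof -
    have "(\<Sum>k=1..2*H. (if k \<le> H then mpow ?AK (k - 1) else 0) *v past w t k)
        = (\<Sum>k=1..2*H. if k \<le> H then (if k \<le> t then mpow ?AK (k - 1) *v w (t - k) else 0) else 0)"
      by (intro sum.cong refl) (simp add: past_def)
    then show ?thesis by (simp add: sum_if_le_eq_sum_min)
  qed
  \<comment> \<open>Lag \<open>i\<close> of \<open>Phi_x\<close> picks up \<open>M_{t-i}^{[k-i]} w_{t-k}\<close> exactly for
    \<open>1 \<le> k - i \<le> H\<close>, so summing over \<open>k\<close> reassembles the feedforward input
    applied at time \<open>t - i\<close>.\<close>
  have forced: "(\<Sum>k=1..2*H. (\<Sum>i=1..H. if 1 \<le> k - i \<and> k - i \<le> H
          then mpow ?AK (i - 1) ** B ** Mpast M t i (k - i) else 0) *v past w t k)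
      = (\<Sum>i=1..min t H. mpow ?AK (i - 1) *v (B *v dap_feedforward H M w (t - i)))"
  proof -
    have "(\<Sum>k=1..2*H. (\<Sum>i=1..H. if 1 \<le> k - i \<and> k - i \<le> H
          then mpow ?AK (i - 1) ** B ** Mpast M t i (k - i) else 0) *v past w t k)
      = (\<Sum>i=1..H. \<Sum>k=1..2*H. if 1 \<le> k - i \<and> k - i \<le> H
          then mpow ?AK (i - 1) *v (B *v (Mpast M t i (k - i) *v past w t k)) else 0)"
      unfolding sum_matrix_vector_mult
      by (subst sum.swap) (auto intro!: sum.cong simp: matrix_vector_mul_assoc matrix_mul_assoc)
    also have "\<dots>
        = (\<Sum>i=1..H. mpow ?AK (i - 1) *v (B *v (\<Sum>l=1..H. Mpast M t i l *v past w t (l + i))))"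
      by (intro sum.cong refl) (auto simp: sum_window_shift vec.sum simp del: One_nat_def)
    also have "\<dots> = (\<Sum>i=1..min t H. mpow ?AK (i - 1) *v (B *v dap_feedforward H M w (t - i)))"
      by (simp add: sum_lagged_feedforward sum_if_le_eq_sum_min if_distrib del: One_nat_def
          cong: if_cong)
    finally show ?thesis .
  qed
  show ?thesis
    unfolding approx_state_def Phi_x_def matrix_vector_mult_add_rdistrib sum.distrib free forced
    by (simp add: dap_drive_def matrix_vector_right_distrib sum.distrib)
qed

lemma approx_action_eq:
  "approx_action A B K H M w t = dap_feedforward H M w t - K *v approx_state A B K H M w t"
proof -
  have "approx_action A B K H M w t
      = (\<Sum>k=1..2*H. if k \<le> H then M t k *v past w t k else 0) - K *v approx_state A B K H M w t"
    unfolding approx_action_def approx_state_def Phi_u_def vec.sum sum_subtractf[symmetric]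
    by (intro arg_cong2[where f = "(-)"] sum.cong refl)
       (auto simp: matrix_vector_mult_diff_rdistrib matrix_vector_mul_assoc)
  then show ?thesis by (simp add: sum_if_le_eq_sum_min dap_feedforward_def)
qed

lemma approx_state_eq_dap_state:
  assumes "t \<le> H"
  shows "approx_state A B K H M w t = dap_state A B K H M w t"
    and "approx_action A B K H M w t = dap_action A B K H M w t"
  using assms by (simp_all add: dap_state_unroll approx_state_unroll dap_action_eq approx_action_eq)

lemma borel_measurable_matrix_vector_mult:
  "f \<in> borel_measurable P \<Longrightarrow> (\<lambda>\<omega>. (X::real^'a^'b) *v f \<omega>) \<in> borel_measurable P"
  by (rule borel_measurable_continuous_on[where f = "\<lambda>x. X *v x"])
     (auto intro: linear_continuous_on)

lemma borel_measurable_dap_trajectories: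
  fixes w :: "nat \<Rightarrow> 'w \<Rightarrow> real^'n"
  assumes w_meas: "\<And>t. w t \<in> borel_measurable P"
  shows "(\<lambda>\<omega>. dap_state A B K H M (\<lambda>s. w s \<omega>) t) \<in> borel_measurable P"
    and "(\<lambda>\<omega>. dap_action A B K H M (\<lambda>s. w s \<omega>) t) \<in> borel_measurable P"
    and "(\<lambda>\<omega>. approx_state A B K H M (\<lambda>s. w s \<omega>) t) \<in> borel_measurable P"
    and "(\<lambda>\<omega>. approx_action A B K H M (\<lambda>s. w s \<omega>) t) \<in> borel_measurable P"
proof -
  have past: "(\<lambda>\<omega>. past (\<lambda>s. w s \<omega>) s i) \<in> borel_measurable P" for s i
    by (cases "i \<le> s") (auto simp: past_def w_meas)
  have feedforward: "(\<lambda>\<omega>. dap_feedforward H M (\<lambda>s. w s \<omega>) s) \<in> borel_measurable P" for s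
    unfolding dap_feedforward_def
    by (intro borel_measurable_sum borel_measurable_matrix_vector_mult past)
  have drive: "(\<lambda>\<omega>. dap_drive B H M (\<lambda>s. w s \<omega>) s) \<in> borel_measurable P" for s
    unfolding dap_drive_def
    by (intro borel_measurable_add borel_measurable_matrix_vector_mult feedforward w_meas)
  show state: "(\<lambda>\<omega>. dap_state A B K H M (\<lambda>s. w s \<omega>) t) \<in> borel_measurable P"
    unfolding dap_state_unroll
    by (intro borel_measurable_sum borel_measurable_matrix_vector_mult drive)
  show approx: "(\<lambda>\<omega>. approx_state A B K H M (\<lambda>s. w s \<omega>) t) \<in> borel_measurable P"
    unfolding approx_state_unroll
    by (intro borel_measurable_sum borel_measurable_matrix_vector_mult drive)
  show "(\<lambda>\<omega>. dap_action A B K H M (\<lambda>s. w s \<omega>) t) \<in> borel_measurable P"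
    unfolding dap_action_eq
    by (intro borel_measurable_diff borel_measurable_matrix_vector_mult feedforward state)
  show "(\<lambda>\<omega>. approx_action A B K H M (\<lambda>s. w s \<omega>) t) \<in> borel_measurable P"
    unfolding approx_action_eq
    by (intro borel_measurable_diff borel_measurable_matrix_vector_mult feedforward approx)
qed

lemma abs_diff_le_of_gradient_bound:
  fixes f :: "'a::real_inner \<Rightarrow> 'b::real_inner \<Rightarrow> real"
  assumes grad: "\<And>x u. ((\<lambda>p. f (fst p) (snd p)) has_derivative
           (\<lambda>h. gx x u \<bullet> fst h + gu x u \<bullet> snd h)) (at (x, u))"
    and bdd: "\<And>x u. norm x \<le> b \<Longrightarrow> norm u \<le> b \<Longrightarrow> norm (gx x u) \<le> L \<and> norm (gu x u) \<le> L"
    and in_ball: "norm x \<le> b" "norm u \<le> b" "norm x' \<le> b" "norm u' \<le> b"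
  shows "\<bar>f x u - f x' u'\<bar> \<le> L * (norm (x - x') + norm (u - u'))"
proof -
  define p where "p s = (x' + s *\<^sub>R (x - x'), u' + s *\<^sub>R (u - u'))" for s :: real
  define D where
    "D s = gx (fst (p s)) (snd (p s)) \<bullet> (x - x') + gu (fst (p s)) (snd (p s)) \<bullet> (u - u')" for s
  have deriv: "((\<lambda>s. f (fst (p s)) (snd (p s))) has_real_derivative D s) (at s)" for s
  proof -
    have "(p has_derivative (\<lambda>h. (h *\<^sub>R (x - x'), h *\<^sub>R (u - u')))) (at s)"
      unfolding p_def by (auto intro!: derivative_eq_intros)
    from diff_chain_at[OF this grad[of "fst (p s)" "snd (p s)", unfolded prod.collapse],
        unfolded comp_def]
    show ?thesis
      unfolding has_field_derivative_def
      by (rule has_derivative_eq_rhs) (simp add: D_def fun_eq_iff algebra_simps)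
  qed
  obtain s where s: "0 < s" "s < 1" "f x u - f x' u' = D s"
    using MVT2[of 0 1 "\<lambda>s. f (fst (p s)) (snd (p s))" D] deriv by (auto simp: p_def)
  have "norm (fst (p s)) \<le> b" "norm (snd (p s)) \<le> b"
    using s in_ball convexD[OF convex_cball[of 0 b], of _ _ "1 - s" s]
    by (auto simp: p_def algebra_simps)
  then have "\<bar>D s\<bar> \<le> L * norm (x - x') + L * norm (u - u')"
    unfolding D_def using bdd
    by (intro order_trans[OF abs_triangle_ineq add_mono] order_trans[OF Cauchy_Schwarz_ineq2]
        mult_right_mono) auto
  then show ?thesis using s by (simp add: distrib_left)
qed

lemma abs_le_of_gradient_bound:
  fixes f :: "'a::real_inner \<Rightarrow> 'b::real_inner \<Rightarrow> real"
  assumes grad: "\<And>x u. ((\<lambda>p. f (fst p) (snd p)) has_derivative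
           (\<lambda>h. gx x u \<bullet> fst h + gu x u \<bullet> snd h)) (at (x, u))"
    and bdd: "\<And>x u. norm x \<le> b \<Longrightarrow> norm u \<le> b \<Longrightarrow> norm (gx x u) \<le> L \<and> norm (gu x u) \<le> L"
    and in_ball: "norm x \<le> b" "norm u \<le> b"
  shows "\<bar>f x u\<bar> \<le> \<bar>f 0 0\<bar> + L * (2 * b)"
proof -
  have "0 \<le> b" using in_ball(1) norm_ge_zero order_trans by blast
  then have "0 \<le> L" using bdd[of 0 0] by (auto intro: order_trans[OF norm_ge_zero])
  have "\<bar>f x u - f 0 0\<bar> \<le> L * (norm x + norm u)"
    using abs_diff_le_of_gradient_bound[OF grad bdd in_ball, where x' = 0 and u' = 0] \<open>0 \<le> b\<close>
    by simp
  also have "\<dots> \<le> L * (2 * b)"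
    using \<open>0 \<le> L\<close> in_ball by (intro mult_left_mono) auto
  finally show ?thesis by linarith
qed

lemma (in prob_space) abs_integral_sum_diff_le:
  fixes f g :: "nat \<Rightarrow> 'a \<Rightarrow> real"
  assumes int_f: "\<And>t. t \<le> T \<Longrightarrow> integrable M (f t)"
    and int_g: "\<And>t. t \<le> T \<Longrightarrow> integrable M (g t)"
    and start: "\<And>\<omega>. \<omega> \<in> space M \<Longrightarrow> f 0 \<omega> = g 0 \<omega>"
    and gap: "\<And>t \<omega>. 0 < t \<Longrightarrow> t \<le> T \<Longrightarrow> \<omega> \<in> space M \<Longrightarrow> \<bar>f t \<omega> - g t \<omega>\<bar> \<le> D"
  shows "\<bar>(LINT \<omega>|M. (\<Sum>t=0..T. f t \<omega>)) - (\<Sum>t=0..T. LINT \<omega>|M. g t \<omega>)\<bar> \<le> T * D"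
proof -
  have pointwise: "\<bar>\<Sum>t=0..T. f t \<omega> - g t \<omega>\<bar> \<le> T * D" if "\<omega> \<in> space M" for \<omega>
  proof -
    have "\<bar>\<Sum>t=0..T. f t \<omega> - g t \<omega>\<bar> = \<bar>\<Sum>t=Suc 0..T. f t \<omega> - g t \<omega>\<bar>"
      using start[OF that] by (simp add: sum.atLeast_Suc_atMost)
    also have "\<dots> \<le> (\<Sum>t=Suc 0..T. D)"
      using gap that by (intro order_trans[OF sum_abs sum_mono]) auto
    finally show ?thesis by simp
  qed
  have "integrable M (\<lambda>\<omega>. \<Sum>t=0..T. f t \<omega>)" "integrable M (\<lambda>\<omega>. \<Sum>t=0..T. g t \<omega>)"
    using int_f int_g by (auto intro!: integrable_sum)
  then have "(LINT \<omega>|M. (\<Sum>t=0..T. f t \<omega>)) - (\<Sum>t=0..T. LINT \<omega>|M. g t \<omega>)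
      = (LINT \<omega>|M. (\<Sum>t=0..T. f t \<omega> - g t \<omega>))"
    using int_g by (simp add: sum_subtractf)
  also have "\<bar>\<dots>\<bar> \<le> (LINT \<omega>|M. \<bar>\<Sum>t=0..T. f t \<omega> - g t \<omega>\<bar>)"
    by (rule integral_abs_bound)
  also have "\<dots> \<le> (LINT \<omega>|M. T * D)"
    using int_f int_g pointwise
    by (intro integral_mono integrable_abs integrable_sum Bochner_Integration.integrable_diff) auto
  finally show ?thesis by (simp add: prob_space)
qed

locale dap_params =
  fixes A :: "real^'n^'n" and B :: "real^'m^'n" and K :: "real^'n^'m"
    and \<kappa> \<gamma> wbar :: real and H :: nat and M :: "nat \<Rightarrow> nat \<Rightarrow> real^'n^'m"
  assumes kappa: "1 \<le> \<kappa>" and gamma: "0 < \<gamma>" "\<gamma> < 1"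
    and stable: "strongly_stable \<kappa> \<gamma> A B K"
    and M_in: "\<And>t. in_Mset \<kappa> \<gamma> H (M t)"
    and wbar_pos: "0 < wbar"
begin

definition drive_bound :: real where
  "drive_bound = sqrt (real CARD('n)) * wbar
     + max (spec_norm B) 1 * (2 * sqrt (real CARD('m) * real CARD('n)) * \<kappa>^3 * wbar * H)"

definition state_bound :: real where
  "state_bound = \<kappa>^2 * drive_bound / \<gamma>"

definition action_bound :: real where
  "action_bound = \<kappa> * state_bound + 2 * sqrt (real CARD('m) * real CARD('n)) * \<kappa>^3 * wbar / \<gamma>"

lemma feedforward_const_nonneg: "0 \<le> 2 * sqrt (real CARD('m) * real CARD('n)) * \<kappa>^3 * wbar"
  using kappa wbar_pos by simp

lemma drive_bound_nonneg: "0 \<le> drive_bound"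
  using kappa wbar_pos by (simp add: drive_bound_def)

lemma state_bound_nonneg: "0 \<le> state_bound"
  using drive_bound_nonneg gamma by (simp add: state_bound_def)

lemma state_bound_le_action_bound: "state_bound \<le> action_bound"
proof -
  have "state_bound \<le> \<kappa> * state_bound"
    using kappa state_bound_nonneg by (simp add: mult_le_cancel_right1)
  moreover have "0 \<le> 2 * sqrt (real CARD('m) * real CARD('n)) * \<kappa>^3 * wbar / \<gamma>"
    using kappa gamma wbar_pos by simp
  ultimately show ?thesis
    unfolding action_bound_def by linarith
qed

lemma action_bound_pos: "0 < action_bound"
  using kappa gamma wbar_pos state_bound_nonneg by (simp add: action_bound_def add_nonneg_pos)

lemma action_bound_le_radius:
  assumes small: "\<kappa>^2 * (1 - \<gamma>)^H < 1"
  shows "action_bound \<le>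
    \<kappa> * sqrt (real CARD('n)) * wbar
      * (\<kappa>^2 + 2 * \<kappa>^5 * max (spec_norm B) 1 * sqrt (real CARD('m) * real CARD('n)) * H)
      / ((1 - \<kappa>^2 * (1 - \<gamma>)^H) * \<gamma>)
    + 2 * sqrt (real CARD('m) * real CARD('n)) * \<kappa>^3 * wbar / \<gamma>"
proof -
  define sn where "sn = sqrt (real CARD('n))"
  define C where "C = 2 * \<kappa>^5 * max (spec_norm B) 1 * sqrt (real CARD('m) * real CARD('n)) * H"
  define Y where "Y = sn * wbar * (\<kappa>^2 + C)"
  define \<rho> where "\<rho> = 1 - \<kappa>^2 * (1 - \<gamma>)^H"
  have sn: "1 \<le> sn" unfolding sn_def by (simp add: Suc_leI)
  have \<rho>: "0 < \<rho>" "\<rho> \<le> 1" unfolding \<rho>_def using small gamma by simp_all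
  have "\<kappa>^2 * drive_bound = \<kappa>^2 * sn * wbar + 1 * (wbar * C)"
    unfolding drive_bound_def sn_def C_def by (simp add: algebra_simps power_numeral_reduce)
  also have "\<dots> \<le> \<kappa>^2 * sn * wbar + sn * (wbar * C)"
    using sn kappa wbar_pos unfolding C_def by (intro add_left_mono mult_right_mono) auto
  also have "\<dots> = Y"
    unfolding Y_def by (simp add: algebra_simps)
  finally have "state_bound \<le> Y / \<gamma>"
    unfolding state_bound_def using gamma by (simp add: divide_right_mono)
  also have "\<dots> \<le> Y / (\<rho> * \<gamma>)"
    using \<rho> gamma sn kappa wbar_pos unfolding Y_def C_def
    by (intro divide_left_mono) (auto simp: mult_le_cancel_right1)
  finally have "\<kappa> * state_bound \<le> \<kappa> * (Y / (\<rho> * \<gamma>))"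
    by (rule mult_left_mono) (use kappa in simp)
  then show ?thesis
    unfolding action_bound_def Y_def C_def \<rho>_def sn_def by (simp add: mult.assoc)
qed

end

locale dap_path = dap_params A B K \<kappa> \<gamma> wbar H M
  for A :: "real^'n^'n" and B :: "real^'m^'n" and K :: "real^'n^'m"
    and \<kappa> \<gamma> wbar :: real and H :: nat and M :: "nat \<Rightarrow> nat \<Rightarrow> real^'n^'m" +
  fixes w :: "nat \<Rightarrow> real^'n"
  assumes w_bdd: "\<And>s. infnorm (w s) \<le> wbar"
begin

lemma norm_feedforward_le_sum:
  "norm (dap_feedforward H M w s)
     \<le> 2 * sqrt (real CARD('m) * real CARD('n)) * \<kappa>^3 * wbar * (\<Sum>i=1..H. (1 - \<gamma>)^(i - 1))"
proof -
  have "norm (M s i *v past w s i)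
      \<le> 2 * sqrt (real CARD('m) * real CARD('n)) * \<kappa>^3 * wbar * (1 - \<gamma>)^(i - 1)"
    if "i \<in> {1..H}" for i
  proof -
    have "mat_inf_norm (M s i) \<le> 2 * sqrt (real CARD('n)) * \<kappa>^3 * (1 - \<gamma>)^(i - 1)"
      using M_in[of s] that unfolding in_Mset_def by blast
    moreover have "infnorm (past w s i) \<le> wbar"
      using w_bdd wbar_pos by (simp add: past_def infnorm_0)
    ultimately have "mat_inf_norm (M s i) * infnorm (past w s i)
        \<le> (2 * sqrt (real CARD('n)) * \<kappa>^3 * (1 - \<gamma>)^(i - 1)) * wbar"
      using gamma kappa by (intro mult_mono) (auto simp: infnorm_pos_le)
    then have "norm (M s i *v past w s i)
        \<le> sqrt (real CARD('m)) * ((2 * sqrt (real CARD('n)) * \<kappa>^3 * (1 - \<gamma>)^(i - 1)) * wbar)"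
      using norm_matrix_vector_le_mat_inf_norm[of "M s i" "past w s i"]
      by (meson mult_left_mono order_trans real_sqrt_ge_zero of_nat_0_le_iff)
    then show ?thesis by (simp add: real_sqrt_mult mult_ac)
  qed
  then have "(\<Sum>i=1..H. norm (M s i *v past w s i))
      \<le> (\<Sum>i=1..H. 2 * sqrt (real CARD('m) * real CARD('n)) * \<kappa>^3 * wbar * (1 - \<gamma>)^(i - 1))"
    by (rule sum_mono)
  then show ?thesis
    unfolding dap_feedforward_def sum_distrib_left by (rule order_trans[OF norm_sum])
qed

lemma norm_feedforward_le_horizon:
  "norm (dap_feedforward H M w s) \<le> 2 * sqrt (real CARD('m) * real CARD('n)) * \<kappa>^3 * wbar * H"
proof -
  have "(\<Sum>i=1..H. (1 - \<gamma>)^(i - 1)) \<le> (\<Sum>i=1..H. 1)"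
    using gamma by (intro sum_mono power_le_one) auto
  then have "(\<Sum>i=1..H. (1 - \<gamma>)^(i - 1)) \<le> H" by simp
  then have "2 * sqrt (real CARD('m) * real CARD('n)) * \<kappa>^3 * wbar * (\<Sum>i=1..H. (1 - \<gamma>)^(i - 1))
      \<le> 2 * sqrt (real CARD('m) * real CARD('n)) * \<kappa>^3 * wbar * H"
    by (rule mult_left_mono[OF _ feedforward_const_nonneg])
  then show ?thesis using norm_feedforward_le_sum[of s] by linarith
qed

lemma norm_feedforward_le:
  "norm (dap_feedforward H M w s) \<le> 2 * sqrt (real CARD('m) * real CARD('n)) * \<kappa>^3 * wbar / \<gamma>"
proof -
  have "(\<Sum>i=1..H. (1 - \<gamma>)^(i - 1)) \<le> 1 / \<gamma>"
    using geometric_tail_le[of "1 - \<gamma>" 0 H] gamma by simp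
  then have "2 * sqrt (real CARD('m) * real CARD('n)) * \<kappa>^3 * wbar * (\<Sum>i=1..H. (1 - \<gamma>)^(i - 1))
      \<le> 2 * sqrt (real CARD('m) * real CARD('n)) * \<kappa>^3 * wbar * (1 / \<gamma>)"
    by (rule mult_left_mono[OF _ feedforward_const_nonneg])
  then show ?thesis using norm_feedforward_le_sum[of s] by simp
qed

lemma norm_drive_le: "norm (dap_drive B H M w s) \<le> drive_bound"
proof -
  have "norm (B *v dap_feedforward H M w s) \<le> max (spec_norm B) 1 * norm (dap_feedforward H M w s)"
    by (rule norm_matrix_vector_le) simp
  also have "\<dots> \<le> max (spec_norm B) 1 * (2 * sqrt (real CARD('m) * real CARD('n)) * \<kappa>^3 * wbar * H)"
    by (rule mult_left_mono[OF norm_feedforward_le_horizon]) simp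
  finally have "norm (B *v dap_feedforward H M w s)
      \<le> max (spec_norm B) 1 * (2 * sqrt (real CARD('m) * real CARD('n)) * \<kappa>^3 * wbar * H)" .
  moreover have "norm (w s) \<le> sqrt (real CARD('n)) * wbar"
    using norm_le_infnorm[of "w s"] w_bdd[of s] by (simp add: order_trans mult_left_mono)
  ultimately show ?thesis
    unfolding dap_drive_def drive_bound_def by (intro order_trans[OF norm_triangle_ineq add_mono])
qed

lemma norm_unrolled_tail_le:
  "norm (\<Sum>i=Suc a..N. mpow (A - B ** K) (i - 1) *v dap_drive B H M w (t - i))
     \<le> (1 - \<gamma>)^a * state_bound"
proof -
  have "norm (\<Sum>i=Suc a..N. mpow (A - B ** K) (i - 1) *v dap_drive B H M w (t - i))
      \<le> (\<Sum>i=Suc a..N. \<kappa>^2 * drive_bound * (1 - \<gamma>)^(i - 1))"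
  proof (rule order_trans[OF norm_sum sum_mono])
    fix i
    have "norm (mpow (A - B ** K) (i - 1) *v dap_drive B H M w (t - i))
        \<le> \<kappa>^2 * (1 - \<gamma>)^(i - 1) * norm (dap_drive B H M w (t - i))"
      by (rule strongly_stable_mpow_le[OF stable])
    also have "\<dots> \<le> \<kappa>^2 * (1 - \<gamma>)^(i - 1) * drive_bound"
      using gamma by (intro mult_left_mono norm_drive_le) auto
    finally show "norm (mpow (A - B ** K) (i - 1) *v dap_drive B H M w (t - i))
        \<le> \<kappa>^2 * drive_bound * (1 - \<gamma>)^(i - 1)" by (simp add: mult_ac)
  qed
  also have "\<dots> \<le> \<kappa>^2 * drive_bound * ((1 - \<gamma>)^a / \<gamma>)"
    unfolding sum_distrib_left[symmetric]
    using geometric_tail_le[of "1 - \<gamma>" a N] gamma drive_bound_nonneg by (intro mult_left_mono) auto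
  finally show ?thesis by (simp add: state_bound_def mult_ac)
qed

lemma norm_state_le: "norm (dap_state A B K H M w t) \<le> state_bound"
  using norm_unrolled_tail_le[where a = 0 and N = t and t = t] by (simp add: dap_state_unroll)

lemma norm_approx_state_le: "norm (approx_state A B K H M w t) \<le> state_bound"
  using norm_unrolled_tail_le[where a = 0 and N = "min t H" and t = t]
  by (simp add: approx_state_unroll)

lemma norm_state_diff_le:
  "norm (dap_state A B K H M w t - approx_state A B K H M w t) \<le> (1 - \<gamma>)^H * state_bound"
proof (cases "t \<le> H")
  case True
  then have "approx_state A B K H M w t = dap_state A B K H M w t"
    by (rule approx_state_eq_dap_state(1))
  then show ?thesis using state_bound_nonneg gamma by simp
next
  case False
  then have "{1..t} = {1..H} \<union> {Suc H..t}" by auto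
  then have "dap_state A B K H M w t - approx_state A B K H M w t
      = (\<Sum>i=Suc H..t. mpow (A - B ** K) (i - 1) *v dap_drive B H M w (t - i))"
    using False
    by (simp add: dap_state_unroll approx_state_unroll sum.union_disjoint ivl_disj_int min_def)
  then show ?thesis using norm_unrolled_tail_le[where a = H and N = t and t = t] by simp
qed

lemma norm_feedforward_minus_feedback_le:
  assumes "norm x \<le> state_bound"
  shows "norm (dap_feedforward H M w t - K *v x) \<le> action_bound"
proof -
  have "norm (K *v x) \<le> \<kappa> * state_bound"
    using strongly_stable_gain_le[OF stable, of x] assms kappa
    by (meson mult_left_mono order_trans zero_le_one order.trans)
  then show ?thesis
    using norm_triangle_ineq4[of "dap_feedforward H M w t" "K *v x"] norm_feedforward_le[of t]
    unfolding action_bound_def by linarith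
qed

lemma norm_action_le: "norm (dap_action A B K H M w t) \<le> action_bound"
  unfolding dap_action_eq by (rule norm_feedforward_minus_feedback_le[OF norm_state_le])

lemma norm_approx_action_le: "norm (approx_action A B K H M w t) \<le> action_bound"
  unfolding approx_action_eq by (rule norm_feedforward_minus_feedback_le[OF norm_approx_state_le])

lemma norm_action_diff_le:
  "norm (dap_action A B K H M w t - approx_action A B K H M w t) \<le> \<kappa> * ((1 - \<gamma>)^H * state_bound)"
proof -
  have "norm (dap_action A B K H M w t - approx_action A B K H M w t)
      = norm (K *v (dap_state A B K H M w t - approx_state A B K H M w t))"
    unfolding dap_action_eq approx_action_eq
    by (simp add: matrix_vector_mult_diff_distrib norm_minus_commute)
  also have "\<dots> \<le> \<kappa> * norm (dap_state A B K H M w t - approx_state A B K H M w t)"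
    by (rule strongly_stable_gain_le[OF stable])
  also have "\<dots> \<le> \<kappa> * ((1 - \<gamma>)^H * state_bound)"
    using norm_state_diff_le[of t] kappa by (intro mult_left_mono) auto
  finally show ?thesis .
qed

lemma trajectory_norms_le:
  assumes "action_bound \<le> b"
  shows "norm (dap_state A B K H M w t) \<le> b" "norm (dap_action A B K H M w t) \<le> b"
    "norm (approx_state A B K H M w t) \<le> b" "norm (approx_action A B K H M w t) \<le> b"
  using assms norm_state_le norm_approx_state_le norm_action_le norm_approx_action_le
    state_bound_le_action_bound by (meson order_trans)+

lemma cost_gap_le:
  fixes f :: "real^'n \<Rightarrow> real^'m \<Rightarrow> real"
  assumes grad: "\<And>x u. ((\<lambda>p. f (fst p) (snd p)) has_derivative
           (\<lambda>h. gx x u \<bullet> fst h + gu x u \<bullet> snd h)) (at (x, u))"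
    and grad_bdd: "\<And>x u. norm x \<le> b \<Longrightarrow> norm u \<le> b \<Longrightarrow> norm (gx x u) \<le> L \<and> norm (gu x u) \<le> L"
    and b: "action_bound \<le> b"
  shows "\<bar>f (dap_state A B K H M w t) (dap_action A B K H M w t)
           - f (approx_state A B K H M w t) (approx_action A B K H M w t)\<bar>
         \<le> L * ((1 - \<gamma>)^H * state_bound * (1 + \<kappa>))"
proof -
  have "0 \<le> L"
    using grad_bdd[of 0 0] b action_bound_pos by (auto intro: order_trans[OF norm_ge_zero])
  have "\<bar>f (dap_state A B K H M w t) (dap_action A B K H M w t)
           - f (approx_state A B K H M w t) (approx_action A B K H M w t)\<bar>
      \<le> L * (norm (dap_state A B K H M w t - approx_state A B K H M w t)
             + norm (dap_action A B K H M w t - approx_action A B K H M w t))"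
    by (rule abs_diff_le_of_gradient_bound[OF grad grad_bdd trajectory_norms_le[OF b]])
  also have "\<dots> \<le> L * ((1 - \<gamma>)^H * state_bound + \<kappa> * ((1 - \<gamma>)^H * state_bound))"
    using \<open>0 \<le> L\<close> norm_state_diff_le norm_action_diff_le by (intro mult_left_mono add_mono)
  finally show ?thesis by (simp add: algebra_simps)
qed

end

lemma (in dap_params) total_cost_gap_le:
  fixes P :: "'w measure" and w :: "nat \<Rightarrow> 'w \<Rightarrow> real^'n"
    and c :: "nat \<Rightarrow> real^'n \<Rightarrow> real^'m \<Rightarrow> real"
  assumes P: "prob_space P" and w_meas: "\<And>t. w t \<in> borel_measurable P"
    and w_bdd: "\<And>t \<omega>. \<omega> \<in> space P \<Longrightarrow> infnorm (w t \<omega>) \<le> wbar"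
    and c_grad: "\<And>t x u. t \<le> T \<Longrightarrow> ((\<lambda>p. c t (fst p) (snd p)) has_derivative
           (\<lambda>h. gx t x u \<bullet> fst h + gu t x u \<bullet> snd h)) (at (x, u))"
    and grad_bdd: "\<And>t x u. t \<le> T \<Longrightarrow> norm x \<le> b \<Longrightarrow> norm u \<le> b \<Longrightarrow>
        norm (gx t x u) \<le> L \<and> norm (gu t x u) \<le> L"
    and b: "action_bound \<le> b"
  shows "\<bar>total_cost P w c A B K H M T - (\<Sum>t=0..T. surrogate_cost P w c A B K H M t)\<bar>
           \<le> T * (L * ((1 - \<gamma>)^H * state_bound * (1 + \<kappa>)))"
proof -
  interpret P: prob_space P by (rule P)
  define actual where
    "actual t \<omega> =
       c t (dap_state A B K H M (\<lambda>s. w s \<omega>) t) (dap_action A B K H M (\<lambda>s. w s \<omega>) t)" for t \<omega>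
  define surrogate where
    "surrogate t \<omega> =
       c t (approx_state A B K H M (\<lambda>s. w s \<omega>) t) (approx_action A B K H M (\<lambda>s. w s \<omega>) t)"
    for t \<omega>
  have path: "dap_path A B K \<kappa> \<gamma> wbar H M (\<lambda>s. w s \<omega>)" if "\<omega> \<in> space P" for \<omega>
    using w_bdd[OF that] by (intro dap_path.intro dap_params_axioms dap_path_axioms.intro)
  have cont: "continuous_on UNIV (\<lambda>p. c t (fst p) (snd p))" if "t \<le> T" for t
    using has_derivative_continuous[OF c_grad[OF that]]
    by (auto intro: continuous_at_imp_continuous_on)
  have integrable: "integrable P (actual t)" "integrable P (surrogate t)" if "t \<le> T" for t
  proof -
    note ball = dap_path.trajectory_norms_le[OF path b]
    note bound = abs_le_of_gradient_bound[OF c_grad[OF that] grad_bdd[OF that]]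
    show "integrable P (actual t)" "integrable P (surrogate t)"
      unfolding actual_def surrogate_def using ball bound
      by (intro P.integrable_const_bound[where B = "\<bar>c t 0 0\<bar> + L * (2 * b)"]
          borel_measurable_continuous_Pair[OF _ _ cont[OF that]] borel_measurable_dap_trajectories
          w_meas; auto)+
  qed
  have "\<bar>(LINT \<omega>|P. (\<Sum>t=0..T. actual t \<omega>)) - (\<Sum>t=0..T. LINT \<omega>|P. surrogate t \<omega>)\<bar>
      \<le> T * (L * ((1 - \<gamma>)^H * state_bound * (1 + \<kappa>)))"
  proof (rule P.abs_integral_sum_diff_le[OF integrable])
    show "actual 0 \<omega> = surrogate 0 \<omega>" for \<omega>
      by (simp add: actual_def surrogate_def approx_state_eq_dap_state)
    show "\<bar>actual t \<omega> - surrogate t \<omega>\<bar> \<le> L * ((1 - \<gamma>)^H * state_bound * (1 + \<kappa>))"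
      if "t \<le> T" "\<omega> \<in> space P" for t \<omega>
      unfolding actual_def surrogate_def
      by (rule dap_path.cost_gap_le[OF path[OF that(2)] c_grad[OF that(1)] grad_bdd[OF that(1)] b])
  qed
  then show ?thesis unfolding total_cost_def surrogate_cost_def actual_def surrogate_def .
qed

theorem lemma17:
  fixes A :: "real^'n^'n" and B :: "real^'m^'n" and K :: "real^'n^'m"
    and P :: "'w measure" and w :: "nat \<Rightarrow> 'w \<Rightarrow> real^'n" and wbar :: real
    and c :: "nat \<Rightarrow> real^'n \<Rightarrow> real^'m \<Rightarrow> real"
    and gx :: "nat \<Rightarrow> real^'n \<Rightarrow> real^'m \<Rightarrow> real^'n"
    and gu :: "nat \<Rightarrow> real^'n \<Rightarrow> real^'m \<Rightarrow> real^'m"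
    and G \<kappa> \<gamma> :: real and H T :: nat
    and M :: "nat \<Rightarrow> nat \<Rightarrow> real^'n^'m"
  assumes P: "prob_space P"
    and w_meas: "\<And>t. w t \<in> borel_measurable P"
    and w_indep: "prob_space.indep_vars P (\<lambda>_. borel) w UNIV"
    and w_ident: "\<And>t. distr P borel (w t) = distr P borel (w 0)"
    and wbar_pos: "wbar > 0"
    and w_bdd: "\<And>t \<omega>. \<omega> \<in> space P \<Longrightarrow> infnorm (w t \<omega>) \<le> wbar"
    and c_convex: "\<And>t. t \<le> T \<Longrightarrow> convex_on UNIV (\<lambda>p. c t (fst p) (snd p))"
    and c_grad: "\<And>t x u. t \<le> T \<Longrightarrow>
        ((\<lambda>p. c t (fst p) (snd p)) has_derivative
           (\<lambda>h. gx t x u \<bullet> fst h + gu t x u \<bullet> snd h)) (at (x, u))"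
    and G_pos: "G > 0"
    and grad_bdd: "\<And>t x u b'. t \<le> T \<Longrightarrow> b' > 0 \<Longrightarrow> norm x \<le> b' \<Longrightarrow> norm u \<le> b' \<Longrightarrow>
        norm (gx t x u) \<le> G * b' \<and> norm (gu t x u) \<le> G * b'"
    and kappa: "\<kappa> \<ge> 1" and gamma: "0 < \<gamma>" "\<gamma> < 1"
    and stable: "strongly_stable \<kappa> \<gamma> A B K"
    and H: "H \<ge> 1"
    and small: "\<kappa>^2 * (1 - \<gamma>)^H < 1"
    and M_in: "\<And>t. in_Mset \<kappa> \<gamma> H (M t)"
  shows "let n = real CARD('n); m = real CARD('m); \<kappa>B = max (spec_norm B) 1;
             b = \<kappa> * sqrt n * wbar * (\<kappa>^2 + 2 * \<kappa>^5 * \<kappa>B * sqrt (m * n) * H)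
                   / ((1 - \<kappa>^2 * (1 - \<gamma>)^H) * \<gamma>)
                 + 2 * sqrt (m * n) * \<kappa>^3 * wbar / \<gamma>
         in \<bar>total_cost P w c A B K H M T - (\<Sum>t=0..T. surrogate_cost P w c A B K H M t)\<bar>
              \<le> T * G * b^2 * \<kappa>^2 * (1 - \<gamma>)^H * (1 + \<kappa>)"
proof -
  interpret dap_params A B K \<kappa> \<gamma> wbar H M
    using kappa gamma stable M_in wbar_pos by unfold_locales
  define b where "b = \<kappa> * sqrt (real CARD('n)) * wbar
      * (\<kappa>^2 + 2 * \<kappa>^5 * max (spec_norm B) 1 * sqrt (real CARD('m) * real CARD('n)) * H)
      / ((1 - \<kappa>^2 * (1 - \<gamma>)^H) * \<gamma>)
    + 2 * sqrt (real CARD('m) * real CARD('n)) * \<kappa>^3 * wbar / \<gamma>"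
  have b: "action_bound \<le> b"
    unfolding b_def by (rule action_bound_le_radius[OF small])
  then have "0 < b" "state_bound \<le> b"
    using action_bound_pos state_bound_le_action_bound by linarith+
  have "\<bar>total_cost P w c A B K H M T - (\<Sum>t=0..T. surrogate_cost P w c A B K H M t)\<bar>
      \<le> T * (G * b * ((1 - \<gamma>)^H * state_bound * (1 + \<kappa>)))"
    using grad_bdd \<open>0 < b\<close> by (intro total_cost_gap_le[OF P w_meas w_bdd c_grad _ b]) auto
  moreover have "G * b * ((1 - \<gamma>)^H * state_bound * (1 + \<kappa>)) \<le> G * b * ((1 - \<gamma>)^H * b * (1 + \<kappa>))"
    using G_pos \<open>0 < b\<close> \<open>state_bound \<le> b\<close> gamma kappa by (intro mult_left_mono mult_right_mono) auto
  moreover have "\<dots> \<le> \<kappa>^2 * (G * b * ((1 - \<gamma>)^H * b * (1 + \<kappa>)))"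
    using mult_right_mono[of 1 "\<kappa>^2" "G * b * ((1 - \<gamma>)^H * b * (1 + \<kappa>))"] G_pos \<open>0 < b\<close> gamma kappa
    by (simp add: one_le_power)
  ultimately have "\<bar>total_cost P w c A B K H M T - (\<Sum>t=0..T. surrogate_cost P w c A B K H M t)\<bar>
      \<le> T * (\<kappa>^2 * (G * b * ((1 - \<gamma>)^H * b * (1 + \<kappa>))))"
    by (meson mult_left_mono of_nat_0_le_iff order_trans)
  then show ?thesis
    unfolding Let_def b_def[symmetric] by (simp add: power2_eq_square mult_ac)
qed

end
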